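(* Let $\mathcal{E}=\{\eta_{i},\rho_{i}\}_{i\in\mathbb{N}_{n}}$ be an ensemble and let $H\in\mathbb{H}(\mathcal{E})$ satisfy $\Tr H=q_{\sf G}(\mathcal{E})$. Then $\Pi(\mathcal{E})H\Pi(\mathcal{E})=H$, where $\Pi(\mathcal{E})$ is the orthogonal projection onto the support of $\rho_0=\sum_i\eta_i\rho_i$.
   Context: $\mathbb{N}_{n}=\{1,\ldots,n\}$. $\mathcal{H}$ is a finite-dimensional complex Hilbert space, $\mathbb{H}$ the Hermitian operators on it, $\mathbb{H}_{+}$ the positive-semidefinite ones. An ensemble: density operators $\rho_i$ with probabilities $\eta_i>0$ summing to $1$. A measurement is $\{M_{?}\}\cup\{M_{i}\}_{i\in\mathbb{N}_{n}}\subseteq\mathbb{H}_+$ summing to the identity. $\mathcal{C}_{i}(\mathcal{E})$ is the maximum of $\eta_{i}\Tr(\rho_{i}M_{i})/\Tr(\rho_{0}M_{i})$ over measurements with $\Tr(\rho_{0}M_{i})>0$. $\mathbb{M}_{i}(\mathcal{E})=\{E\in\mathbb{H}_{+}\mid\Tr[(\mathcal{C}_{i}(\mathcal{E})\rho_{0}-\eta_{i}\rho_{i})E]=0\}$, $\mathbb{M}_{i}^{*}(\mathcal{E})=\{E\in\mathbb{H}\mid\Tr(EF)\ge0\ \forall F\in\mathbb{M}_{i}(\mathcal{E})\}$, $\mathbb{H}(\mathcal{E})=\{H\in\mathbb{H}_{+}\mid H-\eta_{i}\rho_{i}\in\mathbb{M}_{i}^{*}(\mathcal{E})\ \forall i\in\mathbb{N}_n\}$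 and $q_{\sf G}(\mathcal{E})=\min_{H\in\mathbb{H}(\mathcal{E})}\Tr H$. *)

theory Defs
  imports "HOL-Analysis.Analysis"
begin

type_synonym 'd cop = "complex^'d^'d"

definition adj :: "'d::finite cop \<Rightarrow> 'd cop" where
  "adj A = (\<chi> i j. cnj (A $ j $ i))"

definition tr :: "'d::finite cop \<Rightarrow> complex" where
  "tr A = (\<Sum>i\<in>UNIV. A $ i $ i)"

definition hermitian :: "'d::finite cop \<Rightarrow> bool" where
  "hermitian A \<longleftrightarrow> adj A = A"

definition psd :: "'d::finite cop \<Rightarrow> bool" where
  "psd A \<longleftrightarrow> hermitian A \<and>
     (\<forall>v::complex^'d. 0 \<le> Re (\<Sum>i\<in>UNIV. cnj (v $ i) * (A *v v) $ i))"

definition density :: "'d::finite cop \<Rightarrow> bool" where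
  "density A \<longleftrightarrow> psd A \<and> tr A = 1"

definition is_ensemble :: "nat \<Rightarrow> (nat \<Rightarrow> real) \<Rightarrow> (nat \<Rightarrow> 'd::finite cop) \<Rightarrow> bool" where
  "is_ensemble n \<eta> \<rho> \<longleftrightarrow> (\<forall>i\<in>{1..n}. \<eta> i > 0 \<and> density (\<rho> i)) \<and> (\<Sum>i=1..n. \<eta> i) = 1"

definition rho0 :: "nat \<Rightarrow> (nat \<Rightarrow> real) \<Rightarrow> (nat \<Rightarrow> 'd::finite cop) \<Rightarrow> 'd cop" where
  "rho0 n \<eta> \<rho> = (\<Sum>i=1..n. \<eta> i *\<^sub>R \<rho> i)"

text \<open>Measurement {M?} \<union> {M_i}: M0 is the inconclusive element M?.\<close>
definition is_measurement :: "nat \<Rightarrow> 'd::finite cop \<Rightarrow> (nat \<Rightarrow> 'd cop) \<Rightarrow> bool" where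
  "is_measurement n M0 M \<longleftrightarrow> psd M0 \<and> (\<forall>i\<in>{1..n}. psd (M i)) \<and> M0 + (\<Sum>i=1..n. M i) = mat 1"

definition Cmax :: "nat \<Rightarrow> (nat \<Rightarrow> real) \<Rightarrow> (nat \<Rightarrow> 'd::finite cop) \<Rightarrow> nat \<Rightarrow> real" where
  "Cmax n \<eta> \<rho> i = Sup {\<eta> i * Re (tr (\<rho> i ** M i)) / Re (tr (rho0 n \<eta> \<rho> ** M i)) | M0 M.
       is_measurement n M0 M \<and> Re (tr (rho0 n \<eta> \<rho> ** M i)) > 0}"

definition Mset :: "nat \<Rightarrow> (nat \<Rightarrow> real) \<Rightarrow> (nat \<Rightarrow> 'd::finite cop) \<Rightarrow> nat \<Rightarrow> 'd cop set" where
  "Mset n \<eta> \<rho> i = {E. psd E \<and>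
     tr ((Cmax n \<eta> \<rho> i *\<^sub>R rho0 n \<eta> \<rho> - \<eta> i *\<^sub>R \<rho> i) ** E) = 0}"

definition Mdual :: "nat \<Rightarrow> (nat \<Rightarrow> real) \<Rightarrow> (nat \<Rightarrow> 'd::finite cop) \<Rightarrow> nat \<Rightarrow> 'd cop set" where
  "Mdual n \<eta> \<rho> i = {E. hermitian E \<and> (\<forall>F\<in>Mset n \<eta> \<rho> i. 0 \<le> Re (tr (E ** F)))}"

definition Hset :: "nat \<Rightarrow> (nat \<Rightarrow> real) \<Rightarrow> (nat \<Rightarrow> 'd::finite cop) \<Rightarrow> 'd cop set" where
  "Hset n \<eta> \<rho> = {H. psd H \<and> (\<forall>i\<in>{1..n}. H - \<eta> i *\<^sub>R \<rho> i \<in> Mdual n \<eta> \<rho> i)}"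

definition qG :: "nat \<Rightarrow> (nat \<Rightarrow> real) \<Rightarrow> (nat \<Rightarrow> 'd::finite cop) \<Rightarrow> real" where
  "qG n \<eta> \<rho> = Inf ((\<lambda>H. Re (tr H)) ` Hset n \<eta> \<rho>)"

definition orth_proj_onto :: "'d::finite cop \<Rightarrow> (complex^'d) set \<Rightarrow> bool" where
  "orth_proj_onto P S \<longleftrightarrow> hermitian P \<and> P ** P = P \<and> range (\<lambda>v. P *v v) = S"

text \<open>Support of an operator: its range (for a positive operator, the orthocomplement of its kernel).\<close>
definition supp :: "'d::finite cop \<Rightarrow> (complex^'d) set" where
  "supp A = range (\<lambda>v. A *v v)"

end

theory Submission
  imports Defs
begin

text \<open>Let \<open>Q = 1 - P\<close>. Because \<open>\<rho>\<^sub>0\<close> is a positive combination of the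
  positive operators \<open>\<rho>\<^sub>i\<close>, every \<open>\<rho>\<^sub>i\<close> vanishes on \<open>ker \<rho>\<^sub>0 = range Q\<close>, so the
  compression \<open>X \<mapsto> P X P\<close> fixes \<open>\<rho>\<^sub>0\<close> and all \<open>\<rho>\<^sub>i\<close>. Being self-dual with respect to the
  trace form, it then maps each cone \<open>\<M>\<^sub>i\<close>, each dual cone \<open>\<M>\<^sub>i\<^sup>*\<close> and hence
  \<open>\<H>(\<E>)\<close> into itself. For an optimal \<open>H\<close> this gives \<open>tr H \<le> tr (P H P)\<close>, i.e.
  \<open>tr (Q H Q) \<le> 0\<close>; as \<open>Q H Q\<close> is positive it vanishes, so \<open>H Q = 0\<close> and \<open>H = P H P\<close>.\<close>

lemma adj_nth [simp]: "adj A $ i $ j = cnj (A $ j $ i)"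
  by (simp add: adj_def)

lemma adj_adj [simp]: "adj (adj A) = A"
  by (simp add: vec_eq_iff)

lemma adj_mult: "adj (A ** B) = adj B ** adj A"
  by (simp add: vec_eq_iff matrix_matrix_mult_def mult.commute)

lemma adj_diff: "adj (A - B) = adj A - adj B"
  by (simp add: vec_eq_iff)

lemma adj_scaleR: "adj (c *\<^sub>R A) = c *\<^sub>R adj A"
  by (simp add: vec_eq_iff)

lemma adj_sum: "adj (sum f S) = (\<Sum>x\<in>S. adj (f x))"
  by (simp add: vec_eq_iff)

lemma adj_mat_1: "adj (mat 1) = mat 1"
  by (simp add: vec_eq_iff mat_def)

lemma matrix_diff_ldistrib: "(C :: 'a::ring_1^'n^'m) ** (A - B) = C ** A - C ** B"
  by (simp add: vec_eq_iff matrix_matrix_mult_def sum_subtractf right_diff_distrib)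

lemma matrix_diff_rdistrib: "((A :: 'a::ring_1^'n^'m) - B) ** C = A ** C - B ** C"
  by (simp add: vec_eq_iff matrix_matrix_mult_def sum_subtractf left_diff_distrib)

lemma matrix_vector_mult_sum_left: "sum f S *v (w :: 'a::comm_ring_1^'n) = (\<Sum>x\<in>S. f x *v w)"
  by (simp add: vec_eq_iff matrix_vector_mult_def sum_distrib_right sum.swap[of _ UNIV S])

lemma matrix_vector_mult_scaleR_left:
  "(c *\<^sub>R A) *v (w :: 'a::real_algebra_1^'n) = c *\<^sub>R (A *v w)"
  by (simp add: vec_eq_iff matrix_vector_mult_def scaleR_sum_right)

lemma matrix_vector_mult_scaleR_right:
  "A *v (c *\<^sub>R w) = c *\<^sub>R (A *v (w :: 'a::real_algebra_1^'n))"
  by (simp add: vec_eq_iff matrix_vector_mult_def scaleR_sum_right)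

lemma matrix_vector_mult_axis_nth: "(A *v axis k 1) $ i = A $ i $ (k :: 'n::finite)"
  by (simp add: matrix_vector_mult_def axis_def if_distrib cong: if_cong)

lemma matrix_eq_iff_axis: "A = B \<longleftrightarrow> (\<forall>k. A *v axis k 1 = B *v axis k (1 :: 'a::semiring_1))"
  by (metis matrix_vector_mult_axis_nth vec_eq_iff)

lemma tr_diff: "tr (A - B) = tr A - tr B"
  by (simp add: tr_def sum_subtractf)

lemma tr_mult_commute: "tr (A ** B) = tr (B ** A)"
proof -
  have "tr (A ** B) = (\<Sum>i\<in>UNIV. \<Sum>k\<in>UNIV. A$i$k * B$k$i)"
    by (simp add: tr_def matrix_matrix_mult_def)
  also have "\<dots> = (\<Sum>k\<in>UNIV. \<Sum>i\<in>UNIV. A$i$k * B$k$i)"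
    by (rule sum.swap)
  finally show ?thesis
    by (simp add: tr_def matrix_matrix_mult_def mult.commute)
qed

lemma tr_compression: "tr (X ** (P ** F ** P)) = tr ((P ** X ** P) ** F)"
  by (metis matrix_mul_assoc tr_mult_commute)

lemma tr_compression_idempotent: "P ** P = P \<Longrightarrow> tr (P ** A ** P) = tr (A ** P)"
  by (metis matrix_mul_assoc tr_mult_commute)

lemma inner_vec_eq_Re_sum: "inner u v = Re (\<Sum>i\<in>UNIV. cnj (u $ i) * v $ i)"
  by (simp add: inner_vec_def inner_complex_def)

lemma psd_iff_inner: "psd A \<longleftrightarrow> hermitian A \<and> (\<forall>v. 0 \<le> inner v (A *v v))"
  by (simp add: psd_def inner_vec_eq_Re_sum)

lemma inner_matrix_vector_mult_adj: "inner u (A *v v) = inner (adj A *v u) v"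
proof -
  have "(\<Sum>i\<in>UNIV. cnj (u$i) * (A *v v)$i) = (\<Sum>i\<in>UNIV. \<Sum>j\<in>UNIV. cnj (u$i) * (A$i$j * v$j))"
    by (simp add: matrix_vector_mult_def sum_distrib_left)
  also have "\<dots> = (\<Sum>j\<in>UNIV. \<Sum>i\<in>UNIV. cnj (u$i) * (A$i$j * v$j))"
    by (rule sum.swap)
  also have "\<dots> = (\<Sum>j\<in>UNIV. cnj ((adj A *v u)$j) * v$j)"
    by (simp add: matrix_vector_mult_def sum_distrib_left mult_ac)
  finally show ?thesis by (simp add: inner_vec_eq_Re_sum)
qed

lemma inner_adj_mult_mult: "inner v ((adj B ** A ** B) *v v) = inner (B *v v) (A *v (B *v v))"
  by (metis adj_adj inner_matrix_vector_mult_adj matrix_vector_mul_assoc)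

lemma hermitian_adj_mult_mult: "hermitian A \<Longrightarrow> hermitian (adj B ** A ** B)"
  by (simp add: hermitian_def adj_mult matrix_mul_assoc)

lemma psd_adj_mult_mult: "psd A \<Longrightarrow> psd (adj B ** A ** B)"
  by (simp add: psd_iff_inner hermitian_adj_mult_mult inner_adj_mult_mult)

lemma Re_tr_eq_sum_inner: "Re (tr A) = (\<Sum>k\<in>UNIV. inner (axis k 1) (A *v axis k 1))"
  by (simp add: tr_def inner_axis' matrix_vector_mult_axis_nth)

lemma psd_Re_tr_nonneg: "psd A \<Longrightarrow> 0 \<le> Re (tr A)"
  by (simp add: psd_iff_inner Re_tr_eq_sum_inner sum_nonneg)

lemma linear_term_eq_0_if_quadratic_nonneg:
  fixes a b :: real
  assumes "\<And>t. 0 \<le> 2 * t * a + t\<^sup>2 * b"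
  shows "a = 0"
proof (rule ccontr)
  assume "a \<noteq> 0"
  define c where "c = \<bar>b\<bar> + 1"
  have "c > 0" "b < 2 * c" by (auto simp: c_def)
  then have "2 * (- a / c) * a + (- a / c)\<^sup>2 * b = a\<^sup>2 * (b - 2 * c) / c\<^sup>2"
    by (simp add: field_simps power2_eq_square)
  also have "\<dots> < 0"
    using \<open>a \<noteq> 0\<close> \<open>b < 2 * c\<close> \<open>c > 0\<close> by (intro divide_neg_pos mult_pos_neg) auto
  finally show False using assms[of "- a / c"] by simp
qed

lemma psd_kernel_if_inner_eq_0:
  assumes "psd A" and "inner w (A *v w) = 0"
  shows "A *v w = 0"
proof -
  have herm: "adj A = A" and nonneg: "\<And>v. 0 \<le> inner v (A *v v)"
    using assms(1) by (auto simp: psd_iff_inner hermitian_def)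
  have "inner u (A *v w) = 0" for u
  proof (rule linear_term_eq_0_if_quadratic_nonneg)
    fix t :: real
    have "inner w (A *v u) = inner u (A *v w)"
      using inner_matrix_vector_mult_adj[of w A u] herm by (simp add: inner_commute)
    then have "inner (w + t *\<^sub>R u) (A *v (w + t *\<^sub>R u))
        = 2 * t * inner u (A *v w) + t\<^sup>2 * inner u (A *v u)"
      using assms(2) by (simp add: matrix_vector_right_distrib matrix_vector_mult_scaleR_right
          inner_add_left inner_add_right algebra_simps power2_eq_square)
    then show "0 \<le> 2 * t * inner u (A *v w) + t\<^sup>2 * inner u (A *v u)"
      using nonneg by metis
  qed
  from this[of "A *v w"] show ?thesis by simp
qed

lemma psd_eq_0_if_Re_tr_le_0:
  assumes "psd A" and "Re (tr A) \<le> 0"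
  shows "A = 0"
proof -
  have nonneg: "\<forall>k\<in>UNIV. 0 \<le> inner (axis k 1) (A *v axis k 1)"
    using assms(1) by (simp add: psd_iff_inner)
  moreover have "(\<Sum>k\<in>UNIV. inner (axis k 1) (A *v axis k 1)) = 0"
    using assms psd_Re_tr_nonneg[of A] by (simp add: Re_tr_eq_sum_inner)
  ultimately have "inner (axis k 1) (A *v axis k 1) = 0" for k
    by (simp add: sum_nonneg_eq_0_iff)
  then show ?thesis
    using psd_kernel_if_inner_eq_0[OF assms(1)] by (simp add: matrix_eq_iff_axis)
qed

lemma psd_combination_kernel:
  assumes "finite I" and pos: "\<And>j. j \<in> I \<Longrightarrow> 0 < c j \<and> psd (A j)"
    and "(\<Sum>j\<in>I. c j *\<^sub>R A j) *v w = 0" and "i \<in> I"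
  shows "A i *v w = 0"
proof -
  have "(\<Sum>j\<in>I. c j * inner w (A j *v w)) = inner w ((\<Sum>j\<in>I. c j *\<^sub>R A j) *v w)"
    by (simp add: matrix_vector_mult_sum_left matrix_vector_mult_scaleR_left inner_sum_right)
  also have "\<dots> = 0"
    using assms(3) by simp
  finally have "c i * inner w (A i *v w) = 0"
    using assms(1,4) pos by (subst (asm) sum_nonneg_eq_0_iff) (auto simp: psd_iff_inner less_imp_le)
  then show ?thesis
    using pos[OF assms(4)] psd_kernel_if_inner_eq_0 by auto
qed

lemma hermitian_mult_eq_iff_mult_eq:
  assumes "hermitian P" and "hermitian A"
  shows "P ** A = A \<longleftrightarrow> A ** P = A"
  using assms by (metis adj_mult hermitian_def)

lemma idempotent_mult_eq_if_range_subset: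
  assumes "P ** P = P" and "range ((*v) A) \<subseteq> range ((*v) P)"
  shows "P ** A = A"
proof -
  have "(P ** A) *v x = A *v x" for x
  proof -
    obtain y where "A *v x = P *v y"
      using assms(2) by auto
    then show ?thesis
      by (metis assms(1) matrix_vector_mul_assoc)
  qed
  then show ?thesis
    by (simp add: matrix_eq)
qed

lemma hermitian_rho0:
  assumes "is_ensemble n \<eta> \<rho>"
  shows "hermitian (rho0 n \<eta> \<rho>)"
proof -
  have "adj (\<rho> i) = \<rho> i" if "i \<in> {1..n}" for i
    using assms that by (simp add: is_ensemble_def density_def psd_def hermitian_def)
  then show ?thesis
    by (simp add: hermitian_def rho0_def adj_sum adj_scaleR)
qed

lemma support_projection_fixes_rho0:
  assumes "is_ensemble n \<eta> \<rho>" and "orth_proj_onto P (supp (rho0 n \<eta> \<rho>))"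
  shows "P ** rho0 n \<eta> \<rho> = rho0 n \<eta> \<rho>" and "rho0 n \<eta> \<rho> ** P = rho0 n \<eta> \<rho>"
proof -
  show "P ** rho0 n \<eta> \<rho> = rho0 n \<eta> \<rho>"
    using assms(2) idempotent_mult_eq_if_range_subset[of P "rho0 n \<eta> \<rho>"]
    by (simp add: orth_proj_onto_def supp_def)
  then show "rho0 n \<eta> \<rho> ** P = rho0 n \<eta> \<rho>"
    using hermitian_mult_eq_iff_mult_eq[OF _ hermitian_rho0[OF assms(1)]] assms(2)
    by (simp add: orth_proj_onto_def)
qed

lemma support_projection_fixes_rho:
  assumes "is_ensemble n \<eta> \<rho>" and "orth_proj_onto P (supp (rho0 n \<eta> \<rho>))" and "i \<in> {1..n}"
  shows "P ** \<rho> i = \<rho> i" and "\<rho> i ** P = \<rho> i"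
proof -
  have pos: "\<And>j. j \<in> {1..n} \<Longrightarrow> 0 < \<eta> j \<and> psd (\<rho> j)"
    using assms(1) by (simp add: is_ensemble_def density_def)
  have "\<rho> i *v (x - P *v x) = 0" for x
  proof (rule psd_combination_kernel[OF _ pos _ assms(3)])
    show "(\<Sum>j = 1..n. \<eta> j *\<^sub>R \<rho> j) *v (x - P *v x) = 0"
      using support_projection_fixes_rho0(2)[OF assms(1,2)]
      by (simp add: rho0_def matrix_vector_mult_diff_distrib matrix_vector_mul_assoc)
  qed simp
  then show "\<rho> i ** P = \<rho> i"
    by (simp add: matrix_eq matrix_vector_mult_diff_distrib matrix_vector_mul_assoc)
  then show "P ** \<rho> i = \<rho> i"
    using hermitian_mult_eq_iff_mult_eq[of P "\<rho> i"] pos[OF assms(3)] assms(2)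
    by (simp add: orth_proj_onto_def psd_def)
qed

lemma compression_diff_scaleR:
  fixes P A B :: "'d::finite cop"
  shows "P ** (a *\<^sub>R A - b *\<^sub>R B) ** P = a *\<^sub>R (P ** A ** P) - b *\<^sub>R (P ** B ** P)"
  by (simp add: matrix_diff_ldistrib matrix_diff_rdistrib matrix_scalar_ac scalar_matrix_assoc[symmetric])

lemma compression_mem_Mset:
  assumes "hermitian P" and "P ** rho0 n \<eta> \<rho> ** P = rho0 n \<eta> \<rho>" and "P ** \<rho> i ** P = \<rho> i"
    and "F \<in> Mset n \<eta> \<rho> i"
  shows "P ** F ** P \<in> Mset n \<eta> \<rho> i"
  using assms psd_adj_mult_mult[of F P]
  by (simp add: Mset_def hermitian_def tr_compression compression_diff_scaleR)

lemma compression_mem_Mdual: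
  assumes "hermitian P" and "P ** rho0 n \<eta> \<rho> ** P = rho0 n \<eta> \<rho>" and "P ** \<rho> i ** P = \<rho> i"
    and "E \<in> Mdual n \<eta> \<rho> i"
  shows "P ** E ** P \<in> Mdual n \<eta> \<rho> i"
proof -
  have "hermitian (P ** E ** P)"
    using assms(1,4) hermitian_adj_mult_mult[of E P] by (simp add: Mdual_def hermitian_def)
  moreover have "0 \<le> Re (tr ((P ** E ** P) ** F))" if "F \<in> Mset n \<eta> \<rho> i" for F
    using assms compression_mem_Mset[OF assms(1-3) that]
    by (simp add: Mdual_def flip: tr_compression)
  ultimately show ?thesis
    by (simp add: Mdual_def)
qed

lemma compression_mem_Hset:
  assumes "hermitian P" and "P ** rho0 n \<eta> \<rho> ** P = rho0 n \<eta> \<rho>"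
    and "\<And>i. i \<in> {1..n} \<Longrightarrow> P ** \<rho> i ** P = \<rho> i" and "H \<in> Hset n \<eta> \<rho>"
  shows "P ** H ** P \<in> Hset n \<eta> \<rho>"
proof -
  have "psd (P ** H ** P)"
    using assms(1,4) psd_adj_mult_mult[of H P] by (simp add: Hset_def hermitian_def)
  moreover have "P ** H ** P - \<eta> i *\<^sub>R \<rho> i \<in> Mdual n \<eta> \<rho> i" if "i \<in> {1..n}" for i
    using compression_mem_Mdual[OF assms(1,2) assms(3)[OF that], of "H - \<eta> i *\<^sub>R \<rho> i"]
      compression_diff_scaleR[of P 1 H "\<eta> i" "\<rho> i"] assms(3,4) that
    by (simp add: Hset_def)
  ultimately show ?thesis
    by (simp add: Hset_def)
qed

lemma qG_le_Re_tr:
  assumes "H \<in> Hset n \<eta> \<rho>"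
  shows "qG n \<eta> \<rho> \<le> Re (tr H)"
  unfolding qG_def
  using assms by (intro cInf_lower) (auto simp: bdd_below_def Hset_def intro!: psd_Re_tr_nonneg)

lemma psd_compression_eq_if_Re_tr_le:
  assumes "psd H" and "hermitian P" and "P ** P = P"
    and "Re (tr H) \<le> Re (tr (P ** H ** P))"
  shows "P ** H ** P = H"
proof -
  define Q where "Q = mat 1 - P"
  have "hermitian Q" and "Q ** Q = Q"
    using assms(2,3)
    by (simp_all add: Q_def hermitian_def adj_diff adj_mat_1 matrix_diff_ldistrib matrix_diff_rdistrib)
  have "tr (Q ** H ** Q) = tr (H ** Q)"
    using \<open>Q ** Q = Q\<close> by (rule tr_compression_idempotent)
  also have "\<dots> = tr H - tr (P ** H ** P)"
    using assms(3) by (simp add: Q_def matrix_diff_ldistrib tr_diff tr_compression_idempotent)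
  finally have "tr (Q ** H ** Q) = tr H - tr (P ** H ** P)" .
  then have "Q ** H ** Q = 0"
    using assms(1,4) \<open>hermitian Q\<close> psd_adj_mult_mult[of H Q]
    by (intro psd_eq_0_if_Re_tr_le_0) (auto simp: hermitian_def)
  then have "H *v (Q *v v) = 0" for v
    using inner_adj_mult_mult[of v Q H] \<open>hermitian Q\<close> psd_kernel_if_inner_eq_0[OF assms(1)]
    by (simp add: hermitian_def)
  then have "H ** P = H"
    by (simp add: matrix_eq Q_def matrix_vector_mult_diff_rdistrib matrix_vector_mult_diff_distrib
        matrix_vector_mul_assoc)
  moreover from this have "P ** H = H"
    using assms(1,2) hermitian_mult_eq_iff_mult_eq by (auto simp: psd_def)
  ultimately show ?thesis
    by simp
qed

theorem lemma3:
  fixes n :: nat and \<eta> :: "nat \<Rightarrow> real" and \<rho> :: "nat \<Rightarrow> 'd::finite cop"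
    and H P :: "'d cop"
  assumes "is_ensemble n \<eta> \<rho>"
    and "H \<in> Hset n \<eta> \<rho>"
    and "tr H = complex_of_real (qG n \<eta> \<rho>)"
    and "orth_proj_onto P (supp (rho0 n \<eta> \<rho>))"
  shows "P ** H ** P = H"
proof (rule psd_compression_eq_if_Re_tr_le)
  show "psd H"
    using assms(2) by (simp add: Hset_def)
  show "hermitian P" and "P ** P = P"
    using assms(4) by (simp_all add: orth_proj_onto_def)
  have "P ** rho0 n \<eta> \<rho> ** P = rho0 n \<eta> \<rho>"
    using support_projection_fixes_rho0[OF assms(1,4)] by simp
  moreover have "P ** \<rho> i ** P = \<rho> i" if "i \<in> {1..n}" for i
    using support_projection_fixes_rho[OF assms(1,4) that] by simp
  ultimately have "P ** H ** P \<in> Hset n \<eta> \<rho>"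
    using compression_mem_Hset[OF \<open>hermitian P\<close> _ _ assms(2)] by blast
  then show "Re (tr H) \<le> Re (tr (P ** H ** P))"
    using qG_le_Re_tr assms(3) by simp
qed

end
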